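(* Let $H$ be a real Hilbert space, $T\subset H\times H$ a closed convex cone, $T(h):=\{z\in H:(h,z)\in T\}$ and $N:=T^\circ$. Consider: (i) there exists $\beta>0$ such that $\langle h,z\rangle\le-\beta$ for all $(h,z)\in N$ with $\|z\|=1$; (ii) there exists $\beta_1>0$ such that for each $h\in S_H\cap\operatorname{sqri}(\operatorname{Proj}_hT)$ there exists $z$ with $(h,z)\in T$ and $\langle h,z\rangle\ge\beta_1$. Then (i) implies (ii). If moreover $\operatorname{qri}N\neq\emptyset$ and $\operatorname{qri}(\operatorname{Proj}_zN)\subset\operatorname{sqri}(\operatorname{Proj}_hT)$, then (ii) implies (i).
   Context: $S_H$ is the unit sphere of $H$. $T^\circ:=\{(a,b)\in H\times H:\langle a,h\rangle+\langle b,z\rangle\le0\ \forall(h,z)\in T\}$. For $S\subset H\times H$: $\operatorname{Proj}_hS:=\{h:\exists z,\ (h,z)\in S\}$, $\operatorname{Proj}_zS:=\{z:\exists h,\ (h,z)\in S\}$. For a set $A$ in a Hilbert space: $\operatorname{qri}A:=\{x\in A:\overline{\operatorname{cone}}(A-x)\text{ is a linear subspace}\}$ and $\operatorname{sqri}A:=\{x\in A:\operatorname{cone}(A-x)\text{ is a closed linear subspace}\}$, where $\operatorname{cone}(A-x)$ is the cone generated by $A-x$ and $\overline{\operatorname{cone}}$ its norm closure. *)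

theory Defs
  imports "HOL-Analysis.Analysis"
begin

definition polar :: "('a::real_inner \<times> 'a) set \<Rightarrow> ('a \<times> 'a) set" where
  "polar T = {(a, b). \<forall>(h, z)\<in>T. inner a h + inner b z \<le> 0}"

definition proj_h :: "('a \<times> 'a) set \<Rightarrow> 'a set" where
  "proj_h S = {h. \<exists>z. (h, z) \<in> S}"

definition proj_z :: "('a \<times> 'a) set \<Rightarrow> 'a set" where
  "proj_z S = {z. \<exists>h. (h, z) \<in> S}"

definition qri :: "'a::real_normed_vector set \<Rightarrow> 'a set" where
  "qri A = {x \<in> A. subspace (closure (cone hull ((\<lambda>a. a - x) ` A)))}"

definition sqri :: "'a::real_normed_vector set \<Rightarrow> 'a set" where
  "sqri A = {x \<in> A. closed (cone hull ((\<lambda>a. a - x) ` A)) \<and> subspace (cone hull ((\<lambda>a. a - x) ` A))}"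

end

theory Submission
  imports Defs
begin

text \<open>
  (i) \<open>\<Longrightarrow>\<close> (ii). Fix a unit vector \<open>h \<in> sqri (Proj\<^sub>h T)\<close>; the cone generated by \<open>Proj\<^sub>h T - h\<close> is a
  closed subspace \<open>L\<close>. A Baire category argument, as in the Robinson--Ursescu theorem, gives
  \<open>r, M\<close> such that \<open>T(h + y)\<close> meets the \<open>M\<close>-ball for all \<open>y \<in> L\<close> with \<open>\<parallel>y\<parallel> < r\<close>. If \<open>(h, 3\<beta>/4)\<close>
  could be separated from the hypograph \<open>{(x, s). (x, z) \<in> T, s \<le> \<langle>h, z\<rangle>}\<close>, the separating
  functional would be a point \<open>(a, h)\<close> of \<open>N\<close> violating (i). So \<open>(h, 3\<beta>/4)\<close> lies in the closure of
  the hypograph, and the uniform bound moves a nearby point of \<open>T\<close> back over \<open>h\<close> at the cost of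
  \<open>\<beta>/4\<close>.

  (ii) \<open>\<Longrightarrow>\<close> (i). For \<open>(a, b) \<in> N\<close> with \<open>b \<in> sqri (Proj\<^sub>h T)\<close>, applying (ii) to \<open>b/\<parallel>b\<parallel>\<close> gives
  \<open>\<langle>a, b\<rangle> \<le> -\<beta>\<^sub>1\<parallel>b\<parallel>\<^sup>2\<close>. Every point of \<open>N\<close> is a limit of points on its segment towards a
  point of \<open>qri N\<close>, and their second components lie in \<open>qri (Proj\<^sub>z N) \<subseteq> sqri (Proj\<^sub>h T)\<close>.
\<close>

section \<open>Nearest points and separation in Hilbert spaces\<close>

lemma norm_diff_parallelogram:
  fixes a b :: "'a::real_inner"
  shows "norm (a - b)^2 = 2 * norm a^2 + 2 * norm b^2 - norm (a + b)^2"
  by (simp add: power2_norm_eq_inner inner_commute algebra_simps)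

lemma norm_diff_le_dist_excess:
  fixes S :: "'a::real_inner set"
  assumes "convex S" and d: "\<And>y. y \<in> S \<Longrightarrow> d \<le> norm (p - y)^2" and "x \<in> S" "y \<in> S"
  shows "norm (x - y)^2 \<le> 2 * (norm (p - x)^2 - d) + 2 * (norm (p - y)^2 - d)"
proof -
  let ?m = "(1/2) *\<^sub>R x + (1/2) *\<^sub>R y"
  have "?m \<in> S" using assms by (intro convexD) auto
  then have "4 * d \<le> norm (2 *\<^sub>R (p - ?m))^2" using d by (simp add: power_mult_distrib)
  also have "2 *\<^sub>R (p - ?m) = (p - x) + (p - y)" by (simp add: algebra_simps scaleR_2)
  finally show ?thesis
    using norm_diff_parallelogram[of "p - y" "p - x"] by (simp add: add.commute)
qed

text \<open>The library's \<open>closest_point\<close> needs \<open>heine_borel\<close>; in a Hilbert space a minimising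
  sequence is Cauchy by the parallelogram law.\<close>

lemma hilbert_closest_point_exists:
  fixes S :: "'a::{real_inner,complete_space} set"
  assumes "closed S" "convex S" "S \<noteq> {}"
  shows "\<exists>q\<in>S. \<forall>y\<in>S. dist p q \<le> dist p y"
proof -
  define d where "d = (INF y\<in>S. norm (p - y)^2)"
  have bdd: "bdd_below ((\<lambda>y. norm (p - y)^2) ` S)" by (rule bdd_belowI[of _ 0]) auto
  have d_le: "d \<le> norm (p - y)^2" if "y \<in> S" for y
    unfolding d_def using bdd that by (rule cINF_lower)
  have "\<exists>x\<in>S. norm (p - x)^2 < d + 1 / (real n + 1)" for n
    using cINF_less_iff[OF assms(3) bdd, of "d + 1 / (real n + 1)"] by (simp add: d_def)
  then obtain x where xS: "\<And>n. x n \<in> S" and x_less: "\<And>n. norm (p - x n)^2 < d + 1 / (real n + 1)"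
    by metis
  have "Cauchy x"
  proof (rule metric_CauchyI)
    fix e :: real assume "e > 0"
    obtain N :: nat where N: "4 / e^2 < real N" using reals_Archimedean2 by blast
    have "dist (x m) (x n) < e" if "N \<le> m" "N \<le> n" for m n
    proof -
      have "1 / (real m + 1) \<le> 1 / (real N + 1)" "1 / (real n + 1) \<le> 1 / (real N + 1)"
        using that by (auto intro!: divide_left_mono)
      moreover have "4 * (1 / (real N + 1)) < e^2"
        using N \<open>e > 0\<close> by (simp add: field_simps) (smt (verit) zero_less_power)
      moreover have "norm (x m - x n)^2 \<le> 2 * (norm (p - x m)^2 - d) + 2 * (norm (p - x n)^2 - d)"
        by (rule norm_diff_le_dist_excess[OF assms(2)]) (use d_le xS in auto)
      ultimately have "norm (x m - x n)^2 < e^2"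
        using x_less[of m] x_less[of n] by (smt (verit))
      then show ?thesis using \<open>e > 0\<close> by (simp add: dist_norm power_less_imp_less_base)
    qed
    then show "\<exists>M. \<forall>m\<ge>M. \<forall>n\<ge>M. dist (x m) (x n) < e" by blast
  qed
  then obtain q where xq: "x \<longlonglongrightarrow> q" using Cauchy_convergent_iff convergent_def by blast
  have "q \<in> S" using closed_sequentially[OF assms(1)] xS xq by blast
  have "(\<lambda>n. norm (p - x n)^2) \<longlonglongrightarrow> norm (p - q)^2" by (intro tendsto_intros xq)
  moreover have "(\<lambda>n. d + 1 / (real n + 1)) \<longlonglongrightarrow> d"
    using LIMSEQ_inverse_real_of_nat_add[of d] by (simp add: inverse_eq_divide add.commute)
  ultimately have "norm (p - q)^2 \<le> d" using x_less by (intro LIMSEQ_le) (auto intro: less_imp_le)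
  then have "dist p q \<le> dist p y" if "y \<in> S" for y
    using d_le[OF that] by (simp add: dist_norm power2_le_imp_le)
  with \<open>q \<in> S\<close> show ?thesis by blast
qed

lemma separating_hyperplane_closed_convex_cone:
  fixes K :: "'a::{real_inner,complete_space} set"
  assumes "closed K" "convex K" "cone K" "K \<noteq> {}" "p \<notin> K"
  shows "\<exists>a. (\<forall>k\<in>K. inner a k \<le> 0) \<and> inner a p > 0"
proof -
  obtain q where "q \<in> K" and q_min: "\<forall>y\<in>K. dist p q \<le> dist p y"
    using hilbert_closest_point_exists[OF assms(1,2,4)] by blast
  have obtuse: "inner (p - q) (y - q) \<le> 0" if "y \<in> K" for y
    using any_closest_point_dot[OF assms(2,1) \<open>q \<in> K\<close> that q_min] .
  have "0 \<in> K" "2 *\<^sub>R q \<in> K"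
    using assms(3,4) \<open>q \<in> K\<close> cone_contains_0 by (auto simp: mem_cone)
  then have orth: "inner (p - q) q = 0"
    using obtuse[of 0] obtuse[of "2 *\<^sub>R q"] by (simp add: algebra_simps inner_diff_right)
  have "inner (p - q) (p - q) > 0" using \<open>q \<in> K\<close> assms(5) by auto
  then show ?thesis
    using obtuse orth by (intro exI[of _ "p - q"]) (auto simp: inner_diff_right)
qed

section \<open>Series in complete normed spaces\<close>

lemma summable_comparison_complete:
  fixes f :: "nat \<Rightarrow> 'a::{real_normed_vector,complete_space}"
  assumes g: "summable g" and f_le: "\<And>n. norm (f n) \<le> g n"
  shows "summable f" and "norm (suminf f) \<le> suminf g"
proof -
  have partial: "norm ((\<Sum>i<n. f i) - (\<Sum>i<m. f i)) \<le> sum g {m..<n}" if "m \<le> n" for m n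
  proof -
    have "(\<Sum>i<n. f i) - (\<Sum>i<m. f i) = sum f {m..<n}"
      using that by (simp add: lessThan_atLeast0 sum_diff_nat_ivl)
    then show ?thesis using f_le by (simp add: sum_norm_le)
  qed
  show "summable f"
    unfolding summable_iff_convergent
  proof (intro Cauchy_convergent CauchyI)
    fix e :: real assume "e > 0"
    then obtain N where N: "\<And>m n. N \<le> m \<Longrightarrow> norm (sum g {m..<n}) < e"
      using g unfolding summable_Cauchy by blast
    have "norm ((\<Sum>i<m. f i) - (\<Sum>i<n. f i)) < e" if "N \<le> m" "N \<le> n" for m n
      using partial[of m n] partial[of n m] N[of m n] N[of n m] that
      by (cases "m \<le> n") (auto simp: norm_minus_commute)
    then show "\<exists>M. \<forall>m\<ge>M. \<forall>n\<ge>M. norm ((\<Sum>i<m. f i) - (\<Sum>i<n. f i)) < e" by blast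
  qed
  then have lim: "(\<lambda>n. norm (\<Sum>i<n. f i)) \<longlonglongrightarrow> norm (suminf f)"
    by (intro tendsto_norm summable_LIMSEQ)
  have bound: "norm (\<Sum>i<n. f i) \<le> suminf g" for n
  proof -
    have "norm (\<Sum>i<n. f i) \<le> (\<Sum>i<n. g i)" using f_le by (simp add: sum_norm_le)
    also have "\<dots> \<le> suminf g" using g f_le by (intro sum_le_suminf) (auto intro: order_trans[OF norm_ge_zero])
    finally show ?thesis .
  qed
  show "norm (suminf f) \<le> suminf g" using LIMSEQ_le_const2[OF lim] bound by blast
qed

lemma sums_Pair: "f sums a \<Longrightarrow> g sums b \<Longrightarrow> (\<lambda>n. (f n, g n)) sums (a, b)"
  unfolding sums_def by (simp add: sum_prod tendsto_Pair)

lemma closed_convex_cone_sums_mem: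
  assumes "closed T" "convex T" "cone T" and f: "\<And>n. f n \<in> T" and "f sums s"
  shows "s \<in> T"
proof -
  have partial: "(\<Sum>i<n. f i) \<in> T" for n
  proof (induction n)
    case 0
    show ?case using f assms(3) cone_contains_0 by fastforce
  next
    case (Suc n)
    then have "sum f {..<n} + f n \<in> T" using f assms(2,3) convex_cone by blast
    then show ?case by simp
  qed
  show ?thesis
    by (rule closed_sequentially[OF assms(1) partial]) (use \<open>f sums s\<close> in \<open>simp add: sums_def\<close>)
qed

lemma dense_rescaled_approximation:
  fixes L :: "'a::real_normed_vector set"
  assumes "subspace L" "r > 0" and dense: "L \<inter> ball 0 r \<subseteq> closure A"
    and "t > 0" "e \<in> L" "norm e < t * r"
  shows "\<exists>a\<in>A. norm (e - t *\<^sub>R a) < t * r / 2"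
proof -
  have "(1 / t) *\<^sub>R e \<in> L \<inter> ball 0 r"
    using assms(1,4-6) by (simp add: subspace_scale field_simps)
  then have "(1 / t) *\<^sub>R e \<in> closure A" using dense by blast
  then obtain a where "a \<in> A" and a: "dist a ((1 / t) *\<^sub>R e) < r / 2"
    using \<open>r > 0\<close> unfolding closure_approachable by (meson half_gt_zero)
  have "e - t *\<^sub>R a = t *\<^sub>R ((1 / t) *\<^sub>R e - a)" using \<open>t > 0\<close> by (simp add: algebra_simps)
  then have "norm (e - t *\<^sub>R a) = t * dist a ((1 / t) *\<^sub>R e)"
    using \<open>t > 0\<close> by (simp add: dist_norm norm_minus_commute)
  also have "\<dots> < t * r / 2" using a \<open>t > 0\<close> by simp
  finally show ?thesis using \<open>a \<in> A\<close> by blast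
qed

text \<open>Successive approximation, as in the proof of the open mapping theorem.\<close>

lemma dyadic_series_from_dense:
  fixes L :: "'a::real_normed_vector set"
  assumes L: "subspace L" "A \<subseteq> L" and "r > 0" and dense: "L \<inter> ball 0 r \<subseteq> closure A"
    and "y \<in> L" "norm y < r / 2"
  shows "\<exists>a. range a \<subseteq> A \<and> (\<lambda>n. (1/2::real)^Suc n *\<^sub>R a n) sums y"
proof -
  define t :: "nat \<Rightarrow> real" where "t n = (1/2)^Suc n" for n
  have "\<exists>a\<in>A. norm (e - t n *\<^sub>R a) < t (Suc n) * r" if "e \<in> L" "norm e < t n * r" for n e
  proof -
    have "t n > 0" and half: "t (Suc n) * r = t n * r / 2" by (simp_all add: t_def)
    show ?thesis
      unfolding half by (rule dense_rescaled_approximation[OF L(1) \<open>r > 0\<close> dense \<open>t n > 0\<close> that])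
  qed
  then have "\<forall>n e. \<exists>a. e \<in> L \<and> norm e < t n * r \<longrightarrow> a \<in> A \<and> norm (e - t n *\<^sub>R a) < t (Suc n) * r"
    by blast
  then obtain g where g: "\<And>n e. e \<in> L \<Longrightarrow> norm e < t n * r \<Longrightarrow>
      g n e \<in> A \<and> norm (e - t n *\<^sub>R g n e) < t (Suc n) * r"
    by metis
  define E where "E = rec_nat y (\<lambda>n e. e - t n *\<^sub>R g n e)"
  have E_simps: "E 0 = y" "E (Suc n) = E n - t n *\<^sub>R g n (E n)" for n by (simp_all add: E_def)
  have E: "E n \<in> L \<and> norm (E n) < t n * r" for n
  proof (induction n)
    case 0
    show ?case using \<open>y \<in> L\<close> \<open>norm y < r / 2\<close> by (simp add: E_simps t_def)
  next
    case (Suc n)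
    then show ?case using g[of "E n" n] L by (auto simp: E_simps subspace_diff subspace_scale)
  qed
  define a where "a n = g n (E n)" for n
  have partial_sums: "(\<Sum>i<n. t i *\<^sub>R a i) = y - E n" for n
    by (induction n) (simp_all add: E_simps a_def)
  have "E \<longlonglongrightarrow> 0"
  proof (rule Lim_null_comparison)
    show "\<forall>\<^sub>F n in sequentially. norm (E n) \<le> r * (1/2) * (1/2)^n"
      using E by (auto simp: t_def less_imp_le algebra_simps)
    show "(\<lambda>n. r * (1/2) * (1/2::real)^n) \<longlonglongrightarrow> 0"
      by (intro tendsto_mult_right_zero LIMSEQ_power_zero) simp
  qed
  then have "(\<lambda>n. t n *\<^sub>R a n) sums y"
    unfolding sums_def partial_sums by (intro tendsto_eq_intros) auto
  moreover have "range a \<subseteq> A" using g E by (auto simp: a_def)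
  ultimately show ?thesis unfolding t_def by blast
qed

section \<open>Uniformly bounded sections of a closed convex cone\<close>

definition bounded_section :: "('a::real_normed_vector \<times> 'a) set \<Rightarrow> 'a \<Rightarrow> real \<Rightarrow> 'a set" where
  "bounded_section T h c = {y. \<exists>w. (h + y, w) \<in> T \<and> norm w \<le> c}"

lemma bounded_section_mono: "c \<le> d \<Longrightarrow> bounded_section T h c \<subseteq> bounded_section T h d"
  unfolding bounded_section_def by force

lemma convex_bounded_section:
  assumes "convex T" shows "convex (bounded_section T h c)"
proof (rule convexI)
  fix u v and a b :: real
  assume "u \<in> bounded_section T h c" "v \<in> bounded_section T h c" and ab: "0 \<le> a" "0 \<le> b" "a + b = 1"
  then obtain wu wv where u: "(h + u, wu) \<in> T" "norm wu \<le> c" and v: "(h + v, wv) \<in> T" "norm wv \<le> c"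
    unfolding bounded_section_def by blast
  have "a *\<^sub>R (h + u, wu) + b *\<^sub>R (h + v, wv) \<in> T" using convexD[OF assms u(1) v(1) ab] .
  moreover have "a *\<^sub>R (h + u, wu) + b *\<^sub>R (h + v, wv) = (h + (a *\<^sub>R u + b *\<^sub>R v), a *\<^sub>R wu + b *\<^sub>R wv)"
    using ab by (simp add: algebra_simps flip: scaleR_add_left)
  moreover have "norm (a *\<^sub>R wu + b *\<^sub>R wv) \<le> c"
  proof -
    have "norm (a *\<^sub>R wu + b *\<^sub>R wv) \<le> a * norm wu + b * norm wv"
      using norm_triangle_ineq[of "a *\<^sub>R wu" "b *\<^sub>R wv"] ab by simp
    also have "\<dots> \<le> a * c + b * c" using ab u(2) v(2) by (intro add_mono mult_left_mono) auto
    finally show ?thesis using ab by (simp flip: distrib_right)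
  qed
  ultimately show "a *\<^sub>R u + b *\<^sub>R v \<in> bounded_section T h c" unfolding bounded_section_def by auto
qed

text \<open>The series of \<open>dyadic_series_from_dense\<close> is a convergent conic combination of points of \<open>T\<close>,
  so the closure can be dropped at the cost of halving the radius.\<close>

lemma ball_subset_bounded_section_if_dense:
  fixes T :: "('a::{real_normed_vector,complete_space} \<times> 'a) set"
  assumes T: "closed T" "convex T" "cone T" and "subspace L" "r > 0"
    and dense: "L \<inter> ball 0 r \<subseteq> closure (L \<inter> bounded_section T h C)"
  shows "L \<inter> ball 0 (r / 2) \<subseteq> bounded_section T h C"
proof
  fix y assume y: "y \<in> L \<inter> ball 0 (r / 2)"
  define t :: "nat \<Rightarrow> real" where "t n = (1/2)^Suc n" for n
  obtain a where "range a \<subseteq> L \<inter> bounded_section T h C" and a_sums: "(\<lambda>n. t n *\<^sub>R a n) sums y"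
    using dyadic_series_from_dense[OF \<open>subspace L\<close> _ \<open>r > 0\<close> dense, of y] y unfolding t_def by auto
  then have "\<forall>n. \<exists>w. (h + a n, w) \<in> T \<and> norm w \<le> C" unfolding bounded_section_def by blast
  then obtain w where w: "\<And>n. (h + a n, w n) \<in> T" "\<And>n. norm (w n) \<le> C" by metis
  have t_sums: "t sums 1" unfolding t_def by (rule power_half_series)
  have w_le: "norm (t n *\<^sub>R w n) \<le> C * t n" for n
    using w(2)[of n] by (simp add: t_def mult.commute mult_right_mono)
  have w_sums: "(\<lambda>n. t n *\<^sub>R w n) sums (\<Sum>n. t n *\<^sub>R w n)"
    using summable_comparison_complete(1)[OF summable_mult[OF sums_summable[OF t_sums]] w_le]
    by (rule summable_sums)
  have "norm (\<Sum>n. t n *\<^sub>R w n) \<le> (\<Sum>n. C * t n)"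
    by (rule summable_comparison_complete(2)[OF summable_mult[OF sums_summable[OF t_sums]] w_le])
  also have "\<dots> = C" using sums_mult[OF t_sums, of C] by (simp add: sums_iff)
  finally have W_le: "norm (\<Sum>n. t n *\<^sub>R w n) \<le> C" .
  have "(\<lambda>n. t n *\<^sub>R h + t n *\<^sub>R a n) sums (1 *\<^sub>R h + y)"
    by (intro sums_add sums_scaleR_left t_sums a_sums)
  then have sums: "(\<lambda>n. t n *\<^sub>R (h + a n, w n)) sums (h + y, \<Sum>n. t n *\<^sub>R w n)"
    using sums_Pair[OF _ w_sums] by (simp add: scaleR_add_right)
  have terms: "t n *\<^sub>R (h + a n, w n) \<in> T" for n
    by (rule mem_cone[OF T(3) w(1)]) (simp add: t_def)
  have "(h + y, \<Sum>n. t n *\<^sub>R w n) \<in> T"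
    by (rule closed_convex_cone_sums_mem[OF T terms sums])
  then show "y \<in> bounded_section T h C" using W_le unfolding bounded_section_def by blast
qed

lemma Baire_closed_cover:
  fixes L :: "'a::complete_space set"
  assumes "closed L" "L \<noteq> {}" "countable \<F>" and closed: "\<And>F. F \<in> \<F> \<Longrightarrow> closed F \<and> F \<subseteq> L"
    and cover: "L \<subseteq> \<Union>\<F>"
  shows "\<exists>F\<in>\<F>. top_of_set L interior_of F \<noteq> {}"
proof (rule ccontr)
  assume no_interior: "\<not> ?thesis"
  have "top_of_set L interior_of \<Union>\<F> = {}"
  proof (rule Baire_category_alt[of "top_of_set L" \<F>])
    show "completely_metrizable_space (top_of_set L) \<or>
        locally_compact_space (top_of_set L) \<and> regular_space (top_of_set L)"
      using completely_metrizable_space_closedin[OF completely_metrizable_space_euclidean]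
        \<open>closed L\<close> unfolding closed_closedin by blast
    fix F assume "F \<in> \<F>"
    then show "closedin (top_of_set L) F \<and> top_of_set L interior_of F = {}"
      using closed no_interior by (simp add: closed_subset)
  qed (rule \<open>countable \<F>\<close>)
  moreover have "\<Union>\<F> = L" using closed cover by blast
  ultimately show False
    using \<open>L \<noteq> {}\<close> by (metis interior_of_topspace topspace_euclidean_subtopology)
qed

text \<open>Convexity spreads the interior point \<open>y\<^sub>0\<close> of the closure of \<open>c \<cdot> A\<close> to the origin,
  using the point \<open>-y\<^sub>0\<close> of \<open>d \<cdot> A\<close>.\<close>

lemma convex_ball_subset_closure:
  fixes A :: "'a::real_normed_vector set"
  assumes "convex A" "subspace L" "c > 0" "d > 0"
    and y0: "y0 \<in> top_of_set L interior_of closure ((*\<^sub>R) c ` A)" and "-y0 \<in> (*\<^sub>R) d ` A"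
  shows "\<exists>r>0. L \<inter> ball 0 r \<subseteq> closure A"
proof -
  obtain U where U: "openin (top_of_set L) U" "y0 \<in> U" "U \<subseteq> closure ((*\<^sub>R) c ` A)"
    using y0 unfolding interior_of_def by blast
  then have "y0 \<in> L" by (meson openin_imp_subset subsetD)
  obtain e where "e > 0" and e: "\<And>x. x \<in> L \<Longrightarrow> dist x y0 < e \<Longrightarrow> x \<in> U"
    using U(1,2) unfolding openin_euclidean_subtopology_iff by blast
  obtain v where "v \<in> A" and v: "-y0 = d *\<^sub>R v" using \<open>-y0 \<in> _\<close> by blast
  have "L \<inter> ball 0 (e / (c + d)) \<subseteq> closure A"
  proof
    fix y assume y: "y \<in> L \<inter> ball 0 (e / (c + d))"
    have "y0 + (c + d) *\<^sub>R y \<in> L" using y \<open>y0 \<in> L\<close> \<open>subspace L\<close> by (simp add: subspace_add subspace_scale)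
    moreover have "dist (y0 + (c + d) *\<^sub>R y) y0 < e"
      using y assms(3,4) by (simp add: dist_norm pos_less_divide_eq mult.commute)
    ultimately have Y: "y0 + (c + d) *\<^sub>R y \<in> closure ((*\<^sub>R) c ` A)" using e U(3) by blast
    show "y \<in> closure A"
      unfolding closure_approachable
    proof (intro allI impI)
      fix \<delta> :: real assume "\<delta> > 0"
      then obtain u where "u \<in> A" and u: "dist (c *\<^sub>R u) (y0 + (c + d) *\<^sub>R y) < (c + d) * \<delta>"
        using Y assms(3,4) unfolding closure_approachable by (metis (no_types, lifting) add_pos_pos imageE mult_pos_pos)
      let ?x = "(c / (c + d)) *\<^sub>R u + (d / (c + d)) *\<^sub>R v"
      have "?x \<in> A"
        using assms(3,4) by (intro convexD[OF \<open>convex A\<close> \<open>u \<in> A\<close> \<open>v \<in> A\<close>]) (auto simp flip: add_divide_distrib)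
      moreover have "(c + d) *\<^sub>R ?x = c *\<^sub>R u + d *\<^sub>R v"
        using assms(3,4) by (simp add: scaleR_add_right)
      then have "(c + d) *\<^sub>R (?x - y) = c *\<^sub>R u - (y0 + (c + d) *\<^sub>R y)"
        by (simp add: scaleR_diff_right flip: v)
      then have "(c + d) * dist ?x y = dist (c *\<^sub>R u) (y0 + (c + d) *\<^sub>R y)"
        using assms(3,4) by (metis abs_of_pos add_pos_pos dist_norm norm_scaleR)
      then have "dist ?x y < \<delta>" using u assms(3,4) by (smt (verit) mult_less_cancel_left_pos)
      ultimately show "\<exists>x\<in>A. dist x y < \<delta>" by blast
    qed
  qed
  moreover have "e / (c + d) > 0" using \<open>e > 0\<close> assms(3,4) by simp
  ultimately show ?thesis by blast
qed

lemma subspace_scaled_bounded_sections_cover: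
  fixes T :: "('a::real_normed_vector \<times> 'a) set"
  assumes "convex T" "(h, z0) \<in> T" "subspace L"
    and radial: "\<And>y. y \<in> L \<Longrightarrow> \<exists>s>0. h + s *\<^sub>R y \<in> proj_h T" and "y \<in> L"
  shows "\<exists>k\<ge>1. y \<in> (*\<^sub>R) (real k) ` (L \<inter> bounded_section T h (real k + norm z0))"
proof -
  obtain s w where "s > 0" and sw: "(h + s *\<^sub>R y, w) \<in> T"
    using radial[OF \<open>y \<in> L\<close>] unfolding proj_h_def by blast
  obtain n :: nat where n: "max (norm w) (1 / s) \<le> real n" using real_arch_simple by blast
  define k where "k = max 1 n"
  define A where "A = L \<inter> bounded_section T h (real k + norm z0)"
  have k: "k \<ge> 1" "norm w \<le> real k" "1 / s \<le> real k" using n by (auto simp: k_def)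
  define l where "l = 1 / (real k * s)"
  have "convex A"
    unfolding A_def using assms(1,3) by (intro convex_Int convex_bounded_section) (auto intro: subspace_imp_convex)
  moreover have "0 \<in> A" using assms(2,3) by (auto simp: A_def bounded_section_def subspace_0)
  moreover have "s *\<^sub>R y \<in> A"
  proof -
    have "norm w \<le> real k + norm z0" using k(2) norm_ge_zero[of z0] by linarith
    moreover have "s *\<^sub>R y \<in> L" using assms(3) \<open>y \<in> L\<close> by (simp add: subspace_scale)
    ultimately show ?thesis using sw unfolding A_def bounded_section_def by blast
  qed
  moreover have "0 \<le> l" "l \<le> 1" using \<open>s > 0\<close> k(1,3) by (auto simp: l_def field_simps)
  ultimately have "(1 - l) *\<^sub>R 0 + l *\<^sub>R (s *\<^sub>R y) \<in> A" by (rule convexD_alt)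
  moreover have "y = real k *\<^sub>R ((1 - l) *\<^sub>R 0 + l *\<^sub>R (s *\<^sub>R y))"
    using \<open>s > 0\<close> k(1) by (simp add: l_def)
  ultimately have "y \<in> (*\<^sub>R) (real k) ` A" by (rule rev_image_eqI)
  then show ?thesis using k(1) unfolding A_def by (intro exI[of _ k] conjI)
qed

text \<open>A Robinson--Ursescu type estimate. The sets \<open>k \<cdot> A\<^sub>k\<close> below cover \<open>L\<close>, so by Baire's
  theorem the closure of one of them has interior in \<open>L\<close>.\<close>

lemma subspace_ball_subset_bounded_section:
  fixes T :: "('a::{real_normed_vector,complete_space} \<times> 'a) set"
  assumes T: "closed T" "convex T" "cone T" and "(h, z0) \<in> T" "closed L" "subspace L"
    and radial: "\<And>y. y \<in> L \<Longrightarrow> \<exists>s>0. h + s *\<^sub>R y \<in> proj_h T"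
  shows "\<exists>r>0. \<exists>M. L \<inter> ball 0 r \<subseteq> bounded_section T h M"
proof -
  define A where "A k = L \<inter> bounded_section T h (real k + norm z0)" for k :: nat
  have A_mono: "A k \<subseteq> A m" if "k \<le> m" for k m
    using that bounded_section_mono[of "real k + norm z0" "real m + norm z0"] by (auto simp: A_def)
  have cover: "\<exists>k\<ge>1. y \<in> (*\<^sub>R) (real k) ` A k" if "y \<in> L" for y
    unfolding A_def using subspace_scaled_bounded_sections_cover[OF T(2) assms(4,6) radial that] .
  have closure_sub: "closure ((*\<^sub>R) (real k) ` A k) \<subseteq> L" for k
    using \<open>closed L\<close> \<open>subspace L\<close> by (intro closure_minimal) (auto simp: A_def subspace_scale)
  have "\<exists>F\<in>(\<lambda>k. closure ((*\<^sub>R) (real k) ` A k)) ` {1..}. top_of_set L interior_of F \<noteq> {}"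
  proof (rule Baire_closed_cover)
    show "L \<noteq> {}" using \<open>subspace L\<close> subspace_0 by blast
    show "L \<subseteq> \<Union> ((\<lambda>k. closure ((*\<^sub>R) (real k) ` A k)) ` {1..})"
    proof
      fix y assume "y \<in> L"
      then obtain k where "k \<ge> 1" and y: "y \<in> (*\<^sub>R) (real k) ` A k" using cover by blast
      have "y \<in> closure ((*\<^sub>R) (real k) ` A k)" by (rule subsetD[OF closure_subset y])
      then show "y \<in> \<Union> ((\<lambda>k. closure ((*\<^sub>R) (real k) ` A k)) ` {1..})"
        using \<open>k \<ge> 1\<close> by auto
    qed
  qed (use \<open>closed L\<close> closure_sub in auto)
  then obtain k y0 where "k \<ge> 1" and y0: "y0 \<in> top_of_set L interior_of closure ((*\<^sub>R) (real k) ` A k)"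
    by blast
  have "y0 \<in> L" using subsetD[OF interior_of_subset_topspace y0] by simp
  then obtain j where "j \<ge> 1" and j: "-y0 \<in> (*\<^sub>R) (real j) ` A j"
    using cover \<open>subspace L\<close> subspace_neg by blast
  define m where "m = max k j"
  have "y0 \<in> top_of_set L interior_of closure ((*\<^sub>R) (real k) ` A m)"
    using y0 A_mono[of k m] unfolding m_def by (meson closure_mono image_mono interior_of_mono max.cobounded1 subsetD)
  moreover have "-y0 \<in> (*\<^sub>R) (real j) ` A m" using j A_mono[of j m] by (auto simp: m_def)
  moreover have "convex (A m)"
    unfolding A_def using T(2) \<open>subspace L\<close> by (intro convex_Int convex_bounded_section) (auto intro: subspace_imp_convex)
  ultimately obtain r where "r > 0" and "L \<inter> ball 0 r \<subseteq> closure (A m)"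
    using convex_ball_subset_closure[OF _ \<open>subspace L\<close>, of "A m" "real k" "real j" y0] \<open>k \<ge> 1\<close> \<open>j \<ge> 1\<close>
    by auto
  then have "L \<inter> ball 0 (r / 2) \<subseteq> bounded_section T h (real m + norm z0)"
    by (intro ball_subset_bounded_section_if_dense[OF T \<open>subspace L\<close>]) (auto simp: A_def)
  then show ?thesis using \<open>r > 0\<close> by (meson half_gt_zero)
qed

section \<open>From the polar bound to the bound on sections\<close>

lemma proj_h_eq: "proj_h S = fst ` S"
  unfolding proj_h_def by force

lemma convex_proj_h: "convex T \<Longrightarrow> convex (proj_h T)"
  unfolding proj_h_eq by (rule convex_linear_image[OF linear_fst])

lemma cone_hull_translate_radial:
  fixes D :: "'a::real_vector set"
  assumes "convex D" "h \<in> D" "y \<in> cone hull ((\<lambda>a. a - h) ` D)"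
  shows "\<exists>s>0. h + s *\<^sub>R y \<in> D"
proof -
  obtain c d where "c \<ge> 0" "d \<in> D" and y: "y = c *\<^sub>R (d - h)"
    using assms(3) unfolding cone_hull_expl by blast
  define s where "s = 1 / (1 + c)"
  have "s > 0" "s \<le> 1" and sc: "s * c = 1 - s" using \<open>c \<ge> 0\<close> by (auto simp: s_def field_simps)
  have "h + s *\<^sub>R y = h + (s * c) *\<^sub>R (d - h)" by (simp add: y)
  also have "\<dots> = s *\<^sub>R h + (1 - s) *\<^sub>R d" unfolding sc by (simp add: algebra_simps)
  also have "\<dots> \<in> D" using convexD[OF assms(1,2) \<open>d \<in> D\<close>] \<open>s > 0\<close> \<open>s \<le> 1\<close> by simp
  finally show ?thesis using \<open>s > 0\<close> by blast
qed

definition inner_hypograph :: "('a::real_inner \<times> 'a) set \<Rightarrow> 'a \<Rightarrow> ('a \<times> real) set" where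
  "inner_hypograph T h = {(x, s). \<exists>z. (x, z) \<in> T \<and> s \<le> inner h z}"

lemma convex_inner_hypograph:
  assumes "convex T" shows "convex (inner_hypograph T h)"
proof (rule convexI)
  fix u v and a b :: real
  assume "u \<in> inner_hypograph T h" "v \<in> inner_hypograph T h" and ab: "0 \<le> a" "0 \<le> b" "a + b = 1"
  then obtain x1 s1 z1 x2 s2 z2 where u: "u = (x1, s1)" "(x1, z1) \<in> T" "s1 \<le> inner h z1"
    and v: "v = (x2, s2)" "(x2, z2) \<in> T" "s2 \<le> inner h z2"
    unfolding inner_hypograph_def by blast
  have "(a *\<^sub>R x1 + b *\<^sub>R x2, a *\<^sub>R z1 + b *\<^sub>R z2) \<in> T"
    using convexD[OF assms u(2) v(2) ab] by simp
  moreover have "a * s1 + b * s2 \<le> inner h (a *\<^sub>R z1 + b *\<^sub>R z2)"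
    using u(3) v(3) ab by (simp add: inner_add_right add_mono mult_left_mono)
  ultimately show "a *\<^sub>R u + b *\<^sub>R v \<in> inner_hypograph T h"
    unfolding inner_hypograph_def u v by auto
qed

lemma cone_inner_hypograph:
  assumes "cone T" shows "cone (inner_hypograph T h)"
  unfolding cone_def
proof (intro ballI allI impI)
  fix u and c :: real assume "u \<in> inner_hypograph T h" "c \<ge> 0"
  then obtain x s z where u: "u = (x, s)" "(x, z) \<in> T" "s \<le> inner h z"
    unfolding inner_hypograph_def by blast
  have "c *\<^sub>R (x, z) \<in> T" using mem_cone[OF assms u(2) \<open>c \<ge> 0\<close>] .
  moreover have "c * s \<le> inner h (c *\<^sub>R z)" using u(3) \<open>c \<ge> 0\<close> by (simp add: mult_left_mono)
  ultimately show "c *\<^sub>R u \<in> inner_hypograph T h" unfolding inner_hypograph_def u by auto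
qed

text \<open>A hyperplane separating \<open>(h, c)\<close> from the hypograph has a positive last coordinate \<open>l\<close>;
  normalising it to \<open>1\<close> gives a point \<open>(a, h)\<close> of the polar cone with \<open>\<langle>a, h\<rangle> > -c\<close>.\<close>

lemma mem_closure_inner_hypograph_if_polar_bound:
  fixes T :: "('a::{real_inner,complete_space} \<times> 'a) set"
  assumes "convex T" "cone T" and polar_bound: "\<forall>(a, b)\<in>polar T. norm b = 1 \<longrightarrow> inner a b \<le> - \<beta>"
    and "norm h = 1" "h \<in> proj_h T" "c < \<beta>"
  shows "(h, c) \<in> closure (inner_hypograph T h)"
proof (rule ccontr)
  define K where "K = closure (inner_hypograph T h)"
  assume "(h, c) \<notin> closure (inner_hypograph T h)"
  then have "(h, c) \<notin> K" by (simp add: K_def)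
  obtain z0 where "(h, z0) \<in> T" using \<open>h \<in> proj_h T\<close> unfolding proj_h_def by blast
  then have h_in: "(h, min c (inner h z0)) \<in> K"
    unfolding K_def by (intro subsetD[OF closure_subset]) (auto simp: inner_hypograph_def)
  have "closed K" "convex K" "cone K"
    unfolding K_def using assms(1,2)
    by (auto intro: convex_closure cone_closure convex_inner_hypograph cone_inner_hypograph)
  then obtain a l where sep: "\<forall>k\<in>K. inner (a, l) k \<le> 0" and pos: "inner a h + l * c > 0"
    using separating_hyperplane_closed_convex_cone[OF _ _ _ _ \<open>(h, c) \<notin> K\<close>] h_in by fastforce
  have "l > 0"
  proof (rule ccontr)
    assume "\<not> l > 0"
    then have "l * c \<le> l * min c (inner h z0)" by (intro mult_left_mono_neg) auto
    moreover have "inner a h + l * min c (inner h z0) \<le> 0" using sep h_in by fastforce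
    ultimately show False using pos by linarith
  qed
  have "((1 / l) *\<^sub>R a, h) \<in> polar T"
    unfolding polar_def
  proof clarify
    fix x z assume "(x, z) \<in> T"
    then have "(x, inner h z) \<in> K"
      unfolding K_def by (intro subsetD[OF closure_subset]) (auto simp: inner_hypograph_def)
    then have "inner a x + l * inner h z \<le> 0" using sep by fastforce
    then show "inner ((1 / l) *\<^sub>R a) x + inner h z \<le> 0"
      using \<open>l > 0\<close> by (simp add: field_simps)
  qed
  then have "inner a h \<le> - \<beta> * l"
    using polar_bound \<open>norm h = 1\<close> \<open>l > 0\<close> by (fastforce simp: field_simps)
  moreover have "l * c < \<beta> * l" using mult_strict_left_mono[OF \<open>c < \<beta>\<close> \<open>l > 0\<close>] by (simp add: mult.commute)
  ultimately show False using pos by linarith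
qed

lemma inner_section_ge_convex_correction:
  fixes T :: "('a::real_inner \<times> 'a) set"
  assumes "convex T" "norm h = 1" "subspace L" and bounded: "L \<inter> ball 0 r \<subseteq> bounded_section T h M"
    and xz: "(x, z) \<in> T" and "h - x \<in> L" and "0 < \<epsilon>" "\<epsilon> < 1" and close: "norm (h - x) < \<epsilon> * r / 2"
  shows "\<exists>z'. (h, z') \<in> T \<and> (1 - \<epsilon>) * inner h z - \<epsilon> * M \<le> inner h z'"
proof -
  define y where "y = ((1 - \<epsilon>) / \<epsilon>) *\<^sub>R (h - x)"
  have "y \<in> L" using \<open>subspace L\<close> \<open>h - x \<in> L\<close> by (simp add: y_def subspace_scale)
  moreover have "norm y < r"
  proof -
    have "0 < \<epsilon> * r" using close norm_ge_zero[of "h - x"] by linarith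
    then have "r > 0" using \<open>0 < \<epsilon>\<close> zero_less_mult_pos by blast
    have "norm y = ((1 - \<epsilon>) / \<epsilon>) * norm (h - x)" using \<open>0 < \<epsilon>\<close> \<open>\<epsilon> < 1\<close> by (simp add: y_def)
    also have "\<dots> \<le> ((1 - \<epsilon>) / \<epsilon>) * (\<epsilon> * r / 2)"
      using close \<open>0 < \<epsilon>\<close> \<open>\<epsilon> < 1\<close> by (intro mult_left_mono) auto
    also have "\<dots> = (1 - \<epsilon>) * r / 2" using \<open>0 < \<epsilon>\<close> by simp
    also have "\<dots> < r" using mult_pos_pos[OF \<open>0 < \<epsilon>\<close> \<open>r > 0\<close>] \<open>r > 0\<close> by (simp add: algebra_simps)
    finally show ?thesis .
  qed
  ultimately obtain w where hw: "(h + y, w) \<in> T" and "norm w \<le> M"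
    using bounded unfolding bounded_section_def by auto
  have "(1 - \<epsilon>) *\<^sub>R (x, z) + \<epsilon> *\<^sub>R (h + y, w) \<in> T"
    using convexD[OF \<open>convex T\<close> xz hw] \<open>0 < \<epsilon>\<close> \<open>\<epsilon> < 1\<close> by simp
  moreover have "\<epsilon> *\<^sub>R y = (1 - \<epsilon>) *\<^sub>R (h - x)" using \<open>0 < \<epsilon>\<close> by (simp add: y_def)
  then have "(1 - \<epsilon>) *\<^sub>R x + \<epsilon> *\<^sub>R (h + y) = h" by (simp add: algebra_simps)
  ultimately have "(h, (1 - \<epsilon>) *\<^sub>R z + \<epsilon> *\<^sub>R w) \<in> T" by simp
  moreover have "- M \<le> inner h w"
    using Cauchy_Schwarz_ineq2[of h w] \<open>norm h = 1\<close> \<open>norm w \<le> M\<close> by simp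
  then have "\<epsilon> * (- M) \<le> \<epsilon> * inner h w" using \<open>0 < \<epsilon>\<close> by (intro mult_left_mono) auto
  then have "(1 - \<epsilon>) * inner h z - \<epsilon> * M \<le> inner h ((1 - \<epsilon>) *\<^sub>R z + \<epsilon> *\<^sub>R w)"
    by (simp add: inner_add_right)
  ultimately show ?thesis by blast
qed

lemma inner_section_ge_if_mem_closure_inner_hypograph:
  fixes T :: "('a::real_inner \<times> 'a) set"
  assumes "convex T" "norm h = 1" "subspace L" and directions: "\<And>x. x \<in> proj_h T \<Longrightarrow> x - h \<in> L"
    and "r > 0" and bounded: "L \<inter> ball 0 r \<subseteq> bounded_section T h M"
    and hc: "(h, c) \<in> closure (inner_hypograph T h)" and "e > 0"
  shows "\<exists>z. (h, z) \<in> T \<and> c - e \<le> inner h z"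
proof -
  have "0 \<in> bounded_section T h M" using bounded \<open>r > 0\<close> \<open>subspace L\<close> subspace_0 by fastforce
  then have "M \<ge> 0" unfolding bounded_section_def using norm_ge_zero order_trans by blast
  define \<epsilon> where "\<epsilon> = min (1/2) (e / (2 * (\<bar>c\<bar> + M + e + 1)))"
  have "0 < \<epsilon>" "\<epsilon> < 1" using \<open>e > 0\<close> \<open>M \<ge> 0\<close> by (auto simp: \<epsilon>_def)
  have \<epsilon>_small: "\<epsilon> * (\<bar>c\<bar> + M) \<le> e / 2"
  proof -
    have "\<epsilon> * (\<bar>c\<bar> + M) \<le> e / (2 * (\<bar>c\<bar> + M + e + 1)) * (\<bar>c\<bar> + M + e + 1)"
      using \<open>0 < \<epsilon>\<close> \<open>e > 0\<close> \<open>M \<ge> 0\<close> by (intro mult_mono) (auto simp: \<epsilon>_def)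
    also have "\<dots> = e / 2" using \<open>e > 0\<close> \<open>M \<ge> 0\<close> by (simp add: field_simps)
    finally show ?thesis .
  qed
  have "min (e / 2) (\<epsilon> * r / 2) > 0" using \<open>e > 0\<close> \<open>0 < \<epsilon>\<close> \<open>r > 0\<close> by simp
  then obtain q where "q \<in> inner_hypograph T h" and q: "dist q (h, c) < min (e / 2) (\<epsilon> * r / 2)"
    using hc unfolding closure_approachable by blast
  then obtain x s z where q_eq: "q = (x, s)" and xz: "(x, z) \<in> T" and "s \<le> inner h z"
    unfolding inner_hypograph_def by blast
  have "norm (h - x) < \<epsilon> * r / 2"
    using dist_fst_le[of q "(h, c)"] q by (simp add: q_eq dist_norm norm_minus_commute)
  moreover have "dist s c < e / 2" using dist_snd_le[of q "(h, c)"] q by (simp add: q_eq)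
  then have "c - e / 2 \<le> inner h z" using \<open>s \<le> inner h z\<close> unfolding dist_real_def by linarith
  moreover have "h - x \<in> L"
    using directions[of x] xz \<open>subspace L\<close> subspace_neg unfolding proj_h_def by fastforce
  ultimately obtain z' where "(h, z') \<in> T" and z': "(1 - \<epsilon>) * (c - e / 2) - \<epsilon> * M \<le> inner h z'"
    using inner_section_ge_convex_correction[OF assms(1-3) bounded xz _ \<open>0 < \<epsilon>\<close> \<open>\<epsilon> < 1\<close>]
      mult_left_mono[of "c - e / 2" "inner h z" "1 - \<epsilon>"] \<open>\<epsilon> < 1\<close> by fastforce
  have "(1 - \<epsilon>) * (c - e / 2) - \<epsilon> * M = c - e / 2 - \<epsilon> * c + \<epsilon> * (e / 2) - \<epsilon> * M"
    by (simp add: field_simps)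
  then have "c - e \<le> (1 - \<epsilon>) * (c - e / 2) - \<epsilon> * M"
    using \<epsilon>_small mult_left_mono[OF abs_ge_self less_imp_le[OF \<open>0 < \<epsilon>\<close>], of c]
      mult_pos_pos[OF \<open>0 < \<epsilon>\<close>, of "e / 2"] \<open>e > 0\<close> by (simp add: distrib_left)
  then show ?thesis using \<open>(h, z') \<in> T\<close> z' by fastforce
qed

lemma sqri_inner_bound_if_polar_bound:
  fixes T :: "('a::{real_inner,complete_space} \<times> 'a) set"
  assumes T: "closed T" "convex T" "cone T" and "\<beta> > 0"
    and polar_bound: "\<forall>(a, b)\<in>polar T. norm b = 1 \<longrightarrow> inner a b \<le> - \<beta>"
    and h: "h \<in> sphere 0 1 \<inter> sqri (proj_h T)"
  shows "\<exists>z. (h, z) \<in> T \<and> \<beta> / 2 \<le> inner h z"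
proof -
  define L where "L = cone hull ((\<lambda>a. a - h) ` proj_h T)"
  have "norm h = 1" "h \<in> proj_h T" "closed L" "subspace L"
    using h unfolding sqri_def L_def by auto
  then obtain z0 where "(h, z0) \<in> T" unfolding proj_h_def by blast
  have "\<exists>s>0. h + s *\<^sub>R y \<in> proj_h T" if "y \<in> L" for y
    using cone_hull_translate_radial[OF convex_proj_h[OF T(2)] \<open>h \<in> proj_h T\<close>] that
    unfolding L_def by blast
  then obtain r M where "r > 0" and bounded: "L \<inter> ball 0 r \<subseteq> bounded_section T h M"
    using subspace_ball_subset_bounded_section[OF T \<open>(h, z0) \<in> T\<close> \<open>closed L\<close> \<open>subspace L\<close>]
    by blast
  have "(h, 3 / 4 * \<beta>) \<in> closure (inner_hypograph T h)"
    using \<open>\<beta> > 0\<close> by (intro mem_closure_inner_hypograph_if_polar_bound[OF T(2,3) polar_bound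
          \<open>norm h = 1\<close> \<open>h \<in> proj_h T\<close>]) simp
  moreover have "x - h \<in> L" if "x \<in> proj_h T" for x
    unfolding L_def using that by (intro hull_inc) blast
  ultimately obtain z where "(h, z) \<in> T" "3 / 4 * \<beta> - \<beta> / 4 \<le> inner h z"
    using inner_section_ge_if_mem_closure_inner_hypograph[OF T(2) \<open>norm h = 1\<close> \<open>subspace L\<close> _
        \<open>r > 0\<close> bounded, of "3 / 4 * \<beta>" "\<beta> / 4"] \<open>\<beta> > 0\<close> by auto
  then show ?thesis by auto
qed

section \<open>Quasi-relative interiors\<close>

lemma cone_hull_linear_image: "linear f \<Longrightarrow> cone hull f ` S = f ` (cone hull S)"
proof -
  have "cone = conic" unfolding cone_def conic_def by blast
  then show "linear f \<Longrightarrow> cone hull f ` S = f ` (cone hull S)" by (metis conic_hull_linear_image)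
qed

lemma subspace_closure_if_negations_in_closure:
  fixes P :: "'a::real_normed_vector set"
  assumes "convex P" "cone P" "P \<noteq> {}" and neg: "\<And>v. v \<in> P \<Longrightarrow> -v \<in> closure P"
  shows "subspace (closure P)"
proof -
  have "P \<subseteq> uminus ` closure P" using neg by force
  then have "closure P \<subseteq> uminus ` closure P"
    by (intro closure_minimal closed_negations closed_closure)
  then have "\<forall>v\<in>closure P. -v \<in> closure P" by force
  moreover have "convex (closure P)" "cone (closure P)" "closure P \<noteq> {}"
    using assms(1-3) by (simp_all add: convex_closure cone_closure)
  ultimately show ?thesis
    by (metis subspace_convex_cone_symmetric convex_cone_iff convex_cone cone_contains_0)
qed

lemma qri_bounded_linear_image:
  fixes f :: "'a::real_normed_vector \<Rightarrow> 'b::real_normed_vector"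
  assumes f: "bounded_linear f" and "convex N" and x: "x \<in> qri N"
  shows "f x \<in> qri (f ` N)"
proof -
  define C where "C = cone hull ((\<lambda>a. a - x) ` N)"
  have "x \<in> N" and sub: "subspace (closure C)" using x unfolding qri_def C_def by auto
  have "(\<lambda>a. a - f x) ` f ` N = f ` (\<lambda>a. a - x) ` N"
    using linear_diff[OF bounded_linear.linear[OF f]] by (force simp: image_image)
  then have fC: "cone hull ((\<lambda>a. a - f x) ` f ` N) = f ` C"
    unfolding C_def using bounded_linear.linear[OF f] by (simp add: cone_hull_linear_image)
  have "subspace (closure (f ` C))"
  proof (rule subspace_closure_if_negations_in_closure)
    show "convex (f ` C)"
      unfolding C_def using f \<open>convex N\<close>
      by (intro convex_linear_image convex_cone_hull convex_translation_subtract) (auto dest: bounded_linear.linear)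
    show "cone (f ` C)" using fC cone_cone_hull by metis
    show "f ` C \<noteq> {}" using \<open>x \<in> N\<close> by (auto simp: C_def cone_hull_empty_iff[symmetric])
    fix v assume "v \<in> f ` C"
    then obtain u where "u \<in> C" "v = f u" by blast
    then have "-u \<in> closure C" using sub closure_subset subspace_neg by blast
    then have "f (-u) \<in> closure (f ` C)"
      using closure_bounded_linear_image_subset[OF f] by blast
    then show "-v \<in> closure (f ` C)" using \<open>v = f u\<close> linear_neg[OF bounded_linear.linear[OF f]] by simp
  qed
  then show ?thesis using \<open>x \<in> N\<close> fC unfolding qri_def by simp
qed

text \<open>If \<open>x\<^sub>0\<close> is a quasi-relative interior point, every direction \<open>c - y\<close> from a point \<open>y\<close> of the open
  segment towards \<open>x\<^sub>0\<close> is, up to the fixed vector \<open>(1 - s)(x - x\<^sub>0)\<close>, a direction from \<open>x\<^sub>0\<close>.\<close>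

lemma qri_convex_combination:
  fixes C :: "'a::real_normed_vector set"
  assumes "convex C" and x0: "x0 \<in> qri C" and "x \<in> C" "0 < s" "s \<le> 1"
  shows "(1 - s) *\<^sub>R x + s *\<^sub>R x0 \<in> qri C"
proof -
  define y where "y = (1 - s) *\<^sub>R x + s *\<^sub>R x0"
  define P where "P = cone hull ((\<lambda>a. a - y) ` C)"
  have "x0 \<in> C" and Q: "subspace (closure (cone hull ((\<lambda>a. a - x0) ` C)))"
    using x0 unfolding qri_def by auto
  have "y \<in> C" using convexD[OF \<open>convex C\<close> \<open>x \<in> C\<close> \<open>x0 \<in> C\<close>] assms(4,5) by (simp add: y_def)
  have "convex P" "cone P" unfolding P_def
    by (simp_all add: convex_cone_hull convex_translation_subtract \<open>convex C\<close> cone_cone_hull)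
  then have add: "u + v \<in> closure P" if "u \<in> closure P" "v \<in> closure P" for u v
    using that convex_closure cone_closure convex_cone by blast
  have in_P: "c - y \<in> P" if "c \<in> C" for c unfolding P_def using that by (intro hull_inc) blast
  have shift: "(1 - s) *\<^sub>R (x - x0) \<in> P"
  proof -
    have "x - y = s *\<^sub>R (x - x0)" by (simp add: y_def algebra_simps)
    then have "(1 - s) *\<^sub>R (x - x0) = ((1 - s) / s) *\<^sub>R (x - y)" using \<open>0 < s\<close> by simp
    then show ?thesis using mem_cone[OF \<open>cone P\<close> in_P[OF \<open>x \<in> C\<close>]] assms(4,5) by simp
  qed
  have "c - x0 \<in> P" if "c \<in> C" for c
  proof -
    have "c - x0 = (c - y) + (1 - s) *\<^sub>R (x - x0)" by (simp add: y_def algebra_simps)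
    then show ?thesis using in_P[OF that] shift \<open>convex P\<close> \<open>cone P\<close> convex_cone by metis
  qed
  then have "cone hull ((\<lambda>a. a - x0) ` C) \<subseteq> P" using \<open>cone P\<close> by (intro hull_minimal) auto
  then have Q_sub: "closure (cone hull ((\<lambda>a. a - x0) ` C)) \<subseteq> closure P" by (rule closure_mono)
  have "subspace (closure P)"
  proof (rule subspace_closure_if_negations_in_closure[OF \<open>convex P\<close> \<open>cone P\<close>])
    show "P \<noteq> {}" using in_P[OF \<open>y \<in> C\<close>] by blast
    fix v assume "v \<in> P"
    then obtain t c where "t \<ge> 0" "c \<in> C" and v: "v = t *\<^sub>R (c - y)"
      unfolding P_def cone_hull_expl by blast
    have "c - x0 \<in> closure (cone hull ((\<lambda>a. a - x0) ` C))"
      using \<open>c \<in> C\<close> by (intro subsetD[OF closure_subset] hull_inc) blast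
    then have "-(c - x0) \<in> closure P" using subspace_neg[OF Q] Q_sub by blast
    moreover have "-(c - y) = -(c - x0) + (1 - s) *\<^sub>R (x - x0)" by (simp add: y_def algebra_simps)
    ultimately have "-(c - y) \<in> closure P" using add shift closure_subset by (metis subsetD)
    then have "t *\<^sub>R (-(c - y)) \<in> closure P" by (rule mem_cone[OF cone_closure[OF \<open>cone P\<close>] _ \<open>t \<ge> 0\<close>])
    then show "-v \<in> closure P" by (simp add: v algebra_simps)
  qed
  then show ?thesis using \<open>y \<in> C\<close> unfolding qri_def P_def y_def by simp
qed

lemma sqri_scaleR:
  fixes D :: "'a::real_normed_vector set"
  assumes "cone D" "h \<in> sqri D" "c > 0"
  shows "c *\<^sub>R h \<in> sqri D"
proof -
  have "h \<in> D" using assms(2) unfolding sqri_def by auto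
  have scale_D: "(*\<^sub>R) c ` D = D" using cone_iff[of D] assms(1,3) \<open>h \<in> D\<close> by blast
  have "(\<lambda>a. a - c *\<^sub>R h) ` D = (*\<^sub>R) c ` (\<lambda>a. a - h) ` D"
    by (subst (1) scale_D[symmetric]) (simp add: image_image scaleR_diff_right)
  then have "cone hull ((\<lambda>a. a - c *\<^sub>R h) ` D) = (*\<^sub>R) c ` (cone hull ((\<lambda>a. a - h) ` D))"
    by (simp add: cone_hull_linear_image linear_scale_self)
  also have "\<dots> = cone hull ((\<lambda>a. a - h) ` D)"
  proof -
    have "cone hull ((\<lambda>a. a - h) ` D) \<noteq> {}" using \<open>h \<in> D\<close> by (auto simp flip: cone_hull_empty_iff)
    then show ?thesis using cone_iff cone_cone_hull \<open>c > 0\<close> by metis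
  qed
  finally show ?thesis
    using assms(2) mem_cone[OF assms(1) \<open>h \<in> D\<close>, of c] \<open>c > 0\<close> unfolding sqri_def by simp
qed

section \<open>From the bound on sections to the polar bound\<close>

lemma proj_z_eq: "proj_z S = snd ` S"
  unfolding proj_z_def by force

lemma cone_proj_h:
  assumes "cone T" shows "cone (proj_h T)"
  unfolding cone_def proj_h_def
proof (intro ballI allI impI)
  fix x and c :: real assume "x \<in> {h. \<exists>z. (h, z) \<in> T}" "c \<ge> 0"
  then obtain z where "(x, z) \<in> T" by blast
  then have "c *\<^sub>R (x, z) \<in> T" using mem_cone[OF assms] \<open>c \<ge> 0\<close> by blast
  then show "c *\<^sub>R x \<in> {h. \<exists>z. (h, z) \<in> T}" by auto
qed

lemma convex_polar: "convex (polar T)"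
proof (rule convexI)
  fix u v and s t :: real
  assume "u \<in> polar T" "v \<in> polar T" "0 \<le> s" "0 \<le> t" "s + t = 1"
  moreover obtain a1 b1 a2 b2 where "u = (a1, b1)" "v = (a2, b2)" by fastforce
  ultimately have "s * (inner a1 h + inner b1 z) + t * (inner a2 h + inner b2 z) \<le> 0" if "(h, z) \<in> T" for h z
    using that unfolding polar_def by (fastforce intro: add_nonpos_nonpos mult_nonneg_nonpos)
  then show "s *\<^sub>R u + t *\<^sub>R v \<in> polar T"
    using \<open>u = _\<close> \<open>v = _\<close> unfolding polar_def by (auto simp: inner_add_left algebra_simps)
qed

lemma polar_inner_le_if_sqri_bound:
  fixes T :: "('a::real_inner \<times> 'a) set"
  assumes "cone T" and bound: "\<forall>h \<in> sphere 0 1 \<inter> sqri (proj_h T). \<exists>z. (h, z) \<in> T \<and> inner h z \<ge> \<beta>\<^sub>1"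
    and "(a, b) \<in> polar T" "b \<in> sqri (proj_h T)"
  shows "inner a b \<le> - \<beta>\<^sub>1 * norm b^2"
proof (cases "b = 0")
  case False
  define u where "u = (1 / norm b) *\<^sub>R b"
  have "u \<in> sphere 0 1 \<inter> sqri (proj_h T)"
    using sqri_scaleR[OF cone_proj_h[OF \<open>cone T\<close>] assms(4)] False by (simp add: u_def)
  then obtain z where "(u, z) \<in> T" "inner u z \<ge> \<beta>\<^sub>1" using bound by blast
  then have "inner a u + inner b z \<le> 0" using \<open>(a, b) \<in> polar T\<close> unfolding polar_def by blast
  moreover have b: "b = norm b *\<^sub>R u" using False by (simp add: u_def)
  ultimately have "inner a u \<le> - (norm b * \<beta>\<^sub>1)"
    using mult_left_mono[OF \<open>inner u z \<ge> \<beta>\<^sub>1\<close> norm_ge_zero[of b]] by (metis inner_scaleR_left add.commute le_diff_eq diff_0 order_trans)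
  then have "norm b * inner a u \<le> norm b * - (norm b * \<beta>\<^sub>1)" by (intro mult_left_mono) auto
  moreover have "inner a b = norm b * inner a u" by (subst b) simp
  ultimately show ?thesis by (simp add: power2_eq_square algebra_simps)
qed simp

text \<open>Move \<open>(a, b)\<close> slightly towards a point of \<open>qri (polar T)\<close>, where the previous estimate
  applies, and let the step tend to \<open>0\<close>.\<close>

lemma polar_inner_le_if_qri_sqri_bound:
  fixes T :: "('a::real_inner \<times> 'a) set"
  assumes "cone T" "x0 \<in> qri (polar T)" and qri_sub: "qri (proj_z (polar T)) \<subseteq> sqri (proj_h T)"
    and bound: "\<forall>h \<in> sphere 0 1 \<inter> sqri (proj_h T). \<exists>z. (h, z) \<in> T \<and> inner h z \<ge> \<beta>\<^sub>1"
    and ab: "(a, b) \<in> polar T"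
  shows "inner a b \<le> - \<beta>\<^sub>1 * norm b^2"
proof -
  obtain a0 b0 where x0: "x0 = (a0, b0)" by fastforce
  have "x0 \<in> polar T" using assms(2) unfolding qri_def by auto
  have b0: "b0 \<in> qri (snd ` polar T)"
    using qri_bounded_linear_image[OF bounded_linear_snd convex_polar assms(2)] by (simp add: x0)
  define g where "g s = inner ((1 - s) *\<^sub>R a + s *\<^sub>R a0) ((1 - s) *\<^sub>R b + s *\<^sub>R b0)
      + \<beta>\<^sub>1 * norm ((1 - s) *\<^sub>R b + s *\<^sub>R b0)^2" for s
  have "g s \<le> 0" if "0 < s" "s \<le> 1" for s
  proof -
    have "((1 - s) *\<^sub>R a + s *\<^sub>R a0, (1 - s) *\<^sub>R b + s *\<^sub>R b0) \<in> polar T"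
      using convexD[OF convex_polar ab \<open>x0 \<in> polar T\<close>] that by (simp add: x0)
    moreover have "(1 - s) *\<^sub>R b + s *\<^sub>R b0 \<in> qri (snd ` polar T)"
      using qri_convex_combination[OF convex_linear_image[OF linear_snd convex_polar] b0 _ that] ab
      by force
    then have "(1 - s) *\<^sub>R b + s *\<^sub>R b0 \<in> sqri (proj_h T)" using qri_sub by (auto simp: proj_z_eq)
    ultimately show ?thesis
      unfolding g_def using polar_inner_le_if_sqri_bound[OF \<open>cone T\<close> bound] by fastforce
  qed
  then have "\<forall>\<^sub>F s in at_right 0. g s \<le> 0"
    unfolding eventually_at_right_field by (intro exI[of _ 1]) auto
  moreover have "(g \<longlongrightarrow> g 0) (at_right 0)" unfolding g_def by (intro tendsto_intros)
  ultimately have "g 0 \<le> 0" by (intro tendsto_upperbound) auto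
  then show ?thesis by (simp add: g_def)
qed

theorem proposition4p3:
  fixes T :: "('a::{real_inner, complete_space} \<times> 'a) set"
  assumes "closed T" and "convex T" and "cone T"
  shows "((\<exists>\<beta>>0. \<forall>(h, z)\<in>polar T. norm z = 1 \<longrightarrow> inner h z \<le> - \<beta>)
            \<longrightarrow> (\<exists>\<beta>\<^sub>1>0. \<forall>h \<in> sphere 0 1 \<inter> sqri (proj_h T).
                    \<exists>z. (h, z) \<in> T \<and> inner h z \<ge> \<beta>\<^sub>1))
       \<and> ((qri (polar T) \<noteq> {} \<and> qri (proj_z (polar T)) \<subseteq> sqri (proj_h T))
            \<longrightarrow> (\<exists>\<beta>\<^sub>1>0. \<forall>h \<in> sphere 0 1 \<inter> sqri (proj_h T).
                    \<exists>z. (h, z) \<in> T \<and> inner h z \<ge> \<beta>\<^sub>1)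
            \<longrightarrow> (\<exists>\<beta>>0. \<forall>(h, z)\<in>polar T. norm z = 1 \<longrightarrow> inner h z \<le> - \<beta>))"
proof (intro conjI impI)
  assume "\<exists>\<beta>>0. \<forall>(h, z)\<in>polar T. norm z = 1 \<longrightarrow> inner h z \<le> - \<beta>"
  then obtain \<beta> where "\<beta> > 0" and polar_bound: "\<forall>(h, z)\<in>polar T. norm z = 1 \<longrightarrow> inner h z \<le> - \<beta>"
    by blast
  then have "\<forall>h \<in> sphere 0 1 \<inter> sqri (proj_h T). \<exists>z. (h, z) \<in> T \<and> inner h z \<ge> \<beta> / 2"
    using sqri_inner_bound_if_polar_bound[OF assms] by blast
  then show "\<exists>\<beta>\<^sub>1>0. \<forall>h \<in> sphere 0 1 \<inter> sqri (proj_h T). \<exists>z. (h, z) \<in> T \<and> inner h z \<ge> \<beta>\<^sub>1"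
    using \<open>\<beta> > 0\<close> by (intro exI[of _ "\<beta> / 2"]) auto
next
  assume "qri (polar T) \<noteq> {} \<and> qri (proj_z (polar T)) \<subseteq> sqri (proj_h T)"
  then obtain x0 where "x0 \<in> qri (polar T)" and qri_sub: "qri (proj_z (polar T)) \<subseteq> sqri (proj_h T)"
    by blast
  assume "\<exists>\<beta>\<^sub>1>0. \<forall>h \<in> sphere 0 1 \<inter> sqri (proj_h T). \<exists>z. (h, z) \<in> T \<and> inner h z \<ge> \<beta>\<^sub>1"
  then obtain \<beta>\<^sub>1 where "\<beta>\<^sub>1 > 0"
    and bound: "\<forall>h \<in> sphere 0 1 \<inter> sqri (proj_h T). \<exists>z. (h, z) \<in> T \<and> inner h z \<ge> \<beta>\<^sub>1" by blast
  have "inner a b \<le> - \<beta>\<^sub>1" if "(a, b) \<in> polar T" "norm b = 1" for a b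
    using polar_inner_le_if_qri_sqri_bound[OF \<open>cone T\<close> \<open>x0 \<in> qri (polar T)\<close> qri_sub bound that(1)]
      that(2) by simp
  then show "\<exists>\<beta>>0. \<forall>(h, z)\<in>polar T. norm z = 1 \<longrightarrow> inner h z \<le> - \<beta>"
    using \<open>\<beta>\<^sub>1 > 0\<close> by blast
qed

end
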